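(* Let $(a,b,c)\in\mathbb{R}^3\setminus\{(0,0,0)\}$, $A_1=(a,b,c)$ and $A_2=(-ae^{c},-be^{-c},-c)$ (the point on the translation curve through the origin and $A_1$ symmetric to $A_1$ with respect to the origin), and let $0<\alpha<\pi$. A point $P=(x,y,z)\in\mathbf{Sol}\setminus\{A_1,A_2\}$ belongs to the translation-like $\alpha$-isoptic surface of the translation-like segment $\overline{A_1A_2}$ if and only if $$\cos\alpha=\frac{e^{z}(x+ae^{c})(x-a)+e^{-z}(y+be^{-c})(y-b)+4\sinh\frac{z+c}{2}\sinh\frac{z-c}{2}}{\sqrt{e^{z+c}(x-a)^2+e^{-(z+c)}(y-b)^2+4\sinh^2\frac{z-c}{2}}\;\sqrt{e^{z-c}(x+ae^{c})^2+e^{-(z-c)}(y+be^{-c})^2+4\sinh^2\frac{z+c}{2}}}.$$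
   Context: $\mathbf{Sol}$ is $\mathbb{R}^3$ with coordinates $(x,y,z)$, group law $(a,b,c)(x,y,z)=(x+ae^{-z},\,y+be^{z},\,z+c)$, and left-invariant metric $ds^2=e^{2z}dx^2+e^{-2z}dy^2+dz^2$. For $P=(p_1,p_2,p_3)$ let $T_P$ be the isometry $(X,Y,Z)\mapsto(p_1+Xe^{-p_3},\,p_2+Ye^{p_3},\,p_3+Z)$, which maps the origin to $P$. The translation curve starting at the origin with initial unit vector $(u,v,w)$ is $t\mapsto\big(-\tfrac{u}{w}(e^{-wt}-1),\tfrac{v}{w}(e^{wt}-1),wt\big)$ if $w\neq0$ and $t\mapsto(ut,vt,0)$ if $w=0$; every point of $\mathbf{Sol}$ lies on exactly one such curve from the origin (with $t\ge0$). The translation curve from $P$ to $Q$ is the image under $T_P$ of the translation curve from the origin to $T_P^{-1}(Q)$. A translation-like segment $\overline{A_1A_2}$ is the arc of a translation curve between $A_1$ and $A_2$ (only its endpoints matter here). The translation-like $\alpha$-isoptic surface of $\overline{A_1A_2}$ is the set of points $P\notin\{A_1,A_2\}$ such that the angle at $P$, measured with the metric at $P$, between the initial tangent vectors of the translation curves from $P$ to $A_1$ and from $P$ to $A_2$ equals $\alpha$. For $\alpha=\pi/2$ it is called the translation-like Thaloid. *)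

theory Defs
  imports "HOL-Analysis.Analysis"
begin

type_synonym pt = "real \<times> real \<times> real"

text \<open>Translation curve starting at the origin with initial vector d = (u,v,w).\<close>
definition tcurve :: "pt \<Rightarrow> real \<Rightarrow> pt" where
  "tcurve d t = (case d of (u, v, w) \<Rightarrow>
     if w \<noteq> 0 then (- (u / w) * (exp (- w * t) - 1), (v / w) * (exp (w * t) - 1), w * t)
     else (u * t, v * t, 0))"

definition unit_vec :: "pt \<Rightarrow> bool" where
  "unit_vec d = (case d of (u, v, w) \<Rightarrow> u^2 + v^2 + w^2 = 1)"

definition TP :: "pt \<Rightarrow> pt \<Rightarrow> pt" where
  "TP P X = (case P of (p1, p2, p3) \<Rightarrow> case X of (X1, X2, X3) \<Rightarrow>
     (p1 + X1 * exp (- p3), p2 + X2 * exp p3, p3 + X3))"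

definition TP_inv :: "pt \<Rightarrow> pt \<Rightarrow> pt" where
  "TP_inv P Q = (case P of (p1, p2, p3) \<Rightarrow> case Q of (q1, q2, q3) \<Rightarrow>
     ((q1 - p1) * exp p3, (q2 - p2) * exp (- p3), q3 - p3))"

text \<open>Initial unit vector of the translation curve from the origin to Q (Q not the origin).\<close>
definition init_dir :: "pt \<Rightarrow> pt" where
  "init_dir Q = (THE d. unit_vec d \<and> (\<exists>t\<ge>0. tcurve d t = Q))"

definition trans_curve :: "pt \<Rightarrow> pt \<Rightarrow> real \<Rightarrow> pt" where
  "trans_curve P Q t = TP P (tcurve (init_dir (TP_inv P Q)) t)"

definition init_tangent :: "pt \<Rightarrow> pt \<Rightarrow> pt" where
  "init_tangent P Q = vector_derivative (trans_curve P Q) (at 0)"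

definition sol_metric :: "pt \<Rightarrow> pt \<Rightarrow> pt \<Rightarrow> real" where
  "sol_metric P X Y = (case P of (p1, p2, p3) \<Rightarrow> case X of (X1, X2, X3) \<Rightarrow> case Y of (Y1, Y2, Y3) \<Rightarrow>
     exp (2 * p3) * X1 * Y1 + exp (- 2 * p3) * X2 * Y2 + X3 * Y3)"

definition sol_angle :: "pt \<Rightarrow> pt \<Rightarrow> pt \<Rightarrow> real" where
  "sol_angle P X Y = arccos (sol_metric P X Y /
      (sqrt (sol_metric P X X) * sqrt (sol_metric P Y Y)))"

definition isoptic :: "real \<Rightarrow> pt \<Rightarrow> pt \<Rightarrow> pt set" where
  "isoptic \<alpha> A1 A2 = {P. P \<noteq> A1 \<and> P \<noteq> A2 \<and>
      sol_angle P (init_tangent P A1) (init_tangent P A2) = \<alpha>}"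

end

theory Submission
  imports Defs
begin

(*
  T_P is an isometry whose linear part TP_lin P carries the Euclidean inner product at the
  origin to the Sol metric at P, so the angle at P is the Euclidean angle between the initial
  directions of the translation curves from the origin to T_P^-1(A1) and T_P^-1(A2).
  If the translation curve with unit initial direction d = (u,v,w) reaches Q at time t, then
  (e^(q3/2) q1, e^(-q3/2) q2, 2 sinh(q3/2)) = t sinhc(wt/2) d is a positive multiple of d, so
  the initial direction towards Q is the normalisation of this explicit vector. For A1 and A2
  these vectors are, up to a common sign, the ones whose inner product and norms form the
  stated quotient.
*)

definition sinhc :: "real \<Rightarrow> real" where
  "sinhc s = (if s = 0 then 1 else sinh s / s)"

lemma sinhc_pos: "sinhc s > 0"
  by (cases s "0::real" rule: linorder_cases) (auto simp: sinhc_def divide_neg_neg)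

lemma mult_sinhc: "s * sinhc s = sinh s"
  by (simp add: sinhc_def)

lemma norm_triple: "norm (u, v, w :: real) = sqrt (u\<^sup>2 + v\<^sup>2 + w\<^sup>2)"
  by (simp add: norm_Pair)

lemma unit_vec_iff_norm: "unit_vec d \<longleftrightarrow> norm d = 1"
  by (cases d) (simp add: unit_vec_def norm_triple)

definition init_dir_vec :: "pt \<Rightarrow> pt" where
  "init_dir_vec Q = (case Q of (q1, q2, q3) \<Rightarrow>
     (exp (q3 / 2) * q1, exp (- q3 / 2) * q2, 2 * sinh (q3 / 2)))"

lemma init_dir_vec_inject: "init_dir_vec Q = init_dir_vec Q' \<longleftrightarrow> Q = Q'"
  by (auto simp: init_dir_vec_def split: prod.splits)

lemma init_dir_vec_eq_0_iff: "init_dir_vec Q = 0 \<longleftrightarrow> Q = 0"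
  by (auto simp: init_dir_vec_def zero_prod_def split: prod.splits)

lemma init_dir_vec_tcurve:
  "init_dir_vec (tcurve (u, v, w) t) = (t * sinhc (w * t / 2)) *\<^sub>R (u, v, w)"
proof (cases "w = 0")
  case False
  have scale: "t * sinhc (w * t / 2) = (exp (w * t / 2) - exp (- w * t / 2)) / w"
    using False mult_sinhc[of "w * t / 2"] by (simp add: sinh_def field_simps)
  have "exp (w * t / 2) * exp (- w * t) = exp (- w * t / 2)"
    and "exp (- w * t / 2) * exp (w * t) = exp (w * t / 2)"
    by (simp_all flip: exp_add)
  then show ?thesis
    using False unfolding scale by (simp add: tcurve_def init_dir_vec_def sinh_def field_simps)
qed (simp add: tcurve_def init_dir_vec_def sinhc_def)

lemma tcurve_sgn_init_dir_vec:
  assumes "Q \<noteq> 0"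
  shows "tcurve (sgn (init_dir_vec Q)) (norm (init_dir_vec Q) / sinhc (snd (snd Q) / 2)) = Q"
proof -
  define V where "V = init_dir_vec Q"
  have "V \<noteq> 0"
    using assms by (simp add: V_def init_dir_vec_eq_0_iff)
  obtain q1 q2 q3 where Q: "Q = (q1, q2, q3)"
    by (cases Q)
  obtain u v w where uvw: "sgn V = (u, v, w)"
    by (cases "sgn V")
  \<comment> \<open>chosen so that the curve reaches height q3; then init_dir_vec_inject applies\<close>
  define t where "t = norm V / sinhc (q3 / 2)"
  have "w = snd (snd V) / norm V"
    using arg_cong[OF uvw, of "\<lambda>p. snd (snd p)"]
    by (simp add: sgn_div_norm divide_inverse_commute)
  then have "w * norm V = 2 * sinh (q3 / 2)"
    using \<open>V \<noteq> 0\<close> by (simp add: V_def Q init_dir_vec_def)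
  then have "w * t = q3"
    using mult_sinhc[of "q3 / 2"] sinhc_pos[of "q3 / 2"] by (simp add: t_def field_simps)
  then have "init_dir_vec (tcurve (u, v, w) t) = (t * sinhc (q3 / 2)) *\<^sub>R sgn V"
    by (simp add: init_dir_vec_tcurve uvw)
  also have "\<dots> = V"
    using sinhc_pos[of "q3 / 2"] \<open>V \<noteq> 0\<close> by (simp add: t_def sgn_div_norm)
  finally have "tcurve (u, v, w) t = Q"
    by (simp add: V_def init_dir_vec_inject)
  then have "tcurve (sgn V) t = Q"
    by (simp add: uvw)
  then show ?thesis
    by (simp add: V_def t_def Q)
qed

lemma sgn_init_dir_vec_tcurve:
  assumes "norm d = 1" "t \<ge> 0" "tcurve d t \<noteq> 0"
  shows "sgn (init_dir_vec (tcurve d t)) = d"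
proof -
  obtain u v w where d: "d = (u, v, w)"
    by (cases d)
  then have V: "init_dir_vec (tcurve d t) = (t * sinhc (w * t / 2)) *\<^sub>R d"
    using init_dir_vec_tcurve by blast
  moreover have "t * sinhc (w * t / 2) \<noteq> 0"
    using assms(3) V init_dir_vec_eq_0_iff[of "tcurve d t"] by auto
  ultimately have "t * sinhc (w * t / 2) > 0"
    using \<open>t \<ge> 0\<close> sinhc_pos[of "w * t / 2"] by (simp add: less_le)
  moreover have "sgn d = d"
    using \<open>norm d = 1\<close> by (simp add: sgn_div_norm)
  ultimately show ?thesis
    by (simp add: V sgn_scaleR)
qed

lemma init_dir_eq_sgn:
  assumes "Q \<noteq> 0"
  shows "init_dir Q = sgn (init_dir_vec Q)"
  unfolding init_dir_def
proof (rule the_equality)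
  have "norm (init_dir_vec Q) / sinhc (snd (snd Q) / 2) \<ge> 0"
    using sinhc_pos[of "snd (snd Q) / 2"] by simp
  moreover have "unit_vec (sgn (init_dir_vec Q))"
    using assms by (simp add: unit_vec_iff_norm norm_sgn init_dir_vec_eq_0_iff)
  ultimately show
    "unit_vec (sgn (init_dir_vec Q)) \<and> (\<exists>t\<ge>0. tcurve (sgn (init_dir_vec Q)) t = Q)"
    using tcurve_sgn_init_dir_vec[OF assms] by blast
next
  fix d
  assume "unit_vec d \<and> (\<exists>t\<ge>0. tcurve d t = Q)"
  then obtain t where "norm d = 1" "t \<ge> 0" "tcurve d t = Q"
    by (auto simp: unit_vec_iff_norm)
  then show "d = sgn (init_dir_vec Q)"
    using assms sgn_init_dir_vec_tcurve[of d t] by simp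
qed

definition TP_lin :: "pt \<Rightarrow> pt \<Rightarrow> pt" where
  "TP_lin P X = (case P of (p1, p2, p3) \<Rightarrow> case X of (X1, X2, X3) \<Rightarrow>
     (X1 * exp (- p3), X2 * exp p3, X3))"

lemma has_vector_derivative_TP_tcurve:
  "((\<lambda>t. TP P (tcurve d t)) has_vector_derivative TP_lin P d) (at 0)"
proof -
  obtain p1 p2 p3 u v w where P: "P = (p1, p2, p3)" and d: "d = (u, v, w)"
    by (cases P, cases d) auto
  show ?thesis
    unfolding P d TP_def tcurve_def TP_lin_def
    by (cases "w = 0") (auto intro!: derivative_eq_intros has_vector_derivative_Pair
        simp flip: has_real_derivative_iff_has_vector_derivative)
qed

lemma init_tangent_eq: "init_tangent P A = TP_lin P (init_dir (TP_inv P A))"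
  unfolding init_tangent_def trans_curve_def
  using has_vector_derivative_TP_tcurve by (rule vector_derivative_at)

lemma sol_metric_TP_lin: "sol_metric P (TP_lin P X) (TP_lin P Y) = inner X Y"
proof -
  obtain p1 p2 p3 where "P = (p1, p2, p3)"
    by (cases P)
  moreover have "exp (2 * p3) * exp (- p3) * exp (- p3) = 1"
    and "exp (- 2 * p3) * exp p3 * exp p3 = 1"
    by (simp_all flip: exp_add)
  ultimately show ?thesis
    by (cases X, cases Y) (simp add: sol_metric_def TP_lin_def algebra_simps)
qed

lemma sol_angle_TP_lin:
  "sol_angle P (TP_lin P X) (TP_lin P Y) = arccos (inner X Y / (norm X * norm Y))"
  by (simp add: sol_angle_def sol_metric_TP_lin norm_eq_sqrt_inner)

lemma TP_inv_eq_0_iff: "TP_inv P Q = 0 \<longleftrightarrow> Q = P"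
  by (cases P, cases Q) (auto simp: TP_inv_def zero_prod_def)

lemma isoptic_iff_cos:
  assumes "P \<noteq> A1" "P \<noteq> A2" "0 < \<alpha>" "\<alpha> < pi"
  defines "V1 \<equiv> init_dir_vec (TP_inv P A1)" and "V2 \<equiv> init_dir_vec (TP_inv P A2)"
  shows "P \<in> isoptic \<alpha> A1 A2 \<longleftrightarrow> cos \<alpha> = inner V1 V2 / (norm V1 * norm V2)"
proof -
  have "TP_inv P A1 \<noteq> 0" "TP_inv P A2 \<noteq> 0"
    using assms(1,2) by (auto simp: TP_inv_eq_0_iff)
  then have "init_tangent P A1 = TP_lin P (sgn V1)" "init_tangent P A2 = TP_lin P (sgn V2)"
    and "V1 \<noteq> 0" "V2 \<noteq> 0"
    by (simp_all add: init_tangent_eq init_dir_eq_sgn V1_def V2_def init_dir_vec_eq_0_iff)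
  then have angle: "sol_angle P (init_tangent P A1) (init_tangent P A2)
      = arccos (inner V1 V2 / (norm V1 * norm V2))"
    by (simp add: sol_angle_TP_lin sgn_div_norm norm_sgn field_simps)
  have "\<bar>inner V1 V2 / (norm V1 * norm V2)\<bar> \<le> 1"
    using Cauchy_Schwarz_ineq2[of V1 V2] \<open>V1 \<noteq> 0\<close> \<open>V2 \<noteq> 0\<close>
    by (simp add: abs_div divide_le_eq_1)
  then have "cos (arccos (inner V1 V2 / (norm V1 * norm V2))) = inner V1 V2 / (norm V1 * norm V2)"
    by (rule cos_arccos_abs)
  moreover have "arccos (cos \<alpha>) = \<alpha>"
    using assms(3,4) by (simp add: arccos_cos)
  ultimately show ?thesis
    unfolding isoptic_def using assms(1,2) angle by auto
qed

lemma init_dir_vec_TP_inv: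
  "init_dir_vec (TP_inv (x, y, z) (a, b, c))
     = - (exp ((z + c) / 2) * (x - a), exp (- ((z + c) / 2)) * (y - b), 2 * sinh ((z - c) / 2))"
proof -
  have "exp ((c - z) / 2) * exp z = exp ((z + c) / 2)"
    and "exp (- ((c - z) / 2)) * exp (- z) = exp (- ((z + c) / 2))"
    by (simp_all flip: exp_add) (simp_all add: field_simps)
  moreover have "sinh ((c - z) / 2) = - sinh ((z - c) / 2)"
    by (metis minus_diff_eq minus_divide_left sinh_minus)
  ultimately show ?thesis
    by (simp add: TP_inv_def init_dir_vec_def algebra_simps)
qed

theorem theorem4p1:
  fixes a b c x y z \<alpha> :: real
  assumes "(a, b, c) \<noteq> (0, 0, 0)"
    and "0 < \<alpha>" and "\<alpha> < pi"
    and "(x, y, z) \<noteq> (a, b, c)"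
    and "(x, y, z) \<noteq> (- a * exp c, - b * exp (- c), - c)"
  shows "(x, y, z) \<in> isoptic \<alpha> (a, b, c) (- a * exp c, - b * exp (- c), - c) \<longleftrightarrow>
    cos \<alpha> =
      (exp z * (x + a * exp c) * (x - a) + exp (- z) * (y + b * exp (- c)) * (y - b)
        + 4 * sinh ((z + c) / 2) * sinh ((z - c) / 2))
      / (sqrt (exp (z + c) * (x - a)^2 + exp (- (z + c)) * (y - b)^2 + 4 * (sinh ((z - c) / 2))^2)
         * sqrt (exp (z - c) * (x + a * exp c)^2 + exp (- (z - c)) * (y + b * exp (- c))^2
                 + 4 * (sinh ((z + c) / 2))^2))"
proof -
  let ?W1 = "(exp ((z + c) / 2) * (x - a), exp (- ((z + c) / 2)) * (y - b), 2 * sinh ((z - c) / 2))"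
  let ?W2 = "(exp ((z - c) / 2) * (x + a * exp c), exp (- ((z - c) / 2)) * (y + b * exp (- c)),
              2 * sinh ((z + c) / 2))"
  have V1: "init_dir_vec (TP_inv (x, y, z) (a, b, c)) = - ?W1"
    by (rule init_dir_vec_TP_inv)
  have V2: "init_dir_vec (TP_inv (x, y, z) (- a * exp c, - b * exp (- c), - c)) = - ?W2"
    using init_dir_vec_TP_inv[of x y z "- a * exp c" "- b * exp (- c)" "- c"] by simp
  have "exp ((z + c) / 2) * exp ((z - c) / 2) = exp z"
    and "exp (- ((z + c) / 2)) * exp (- ((z - c) / 2)) = exp (- z)"
    by (simp_all flip: exp_add) (simp_all add: field_simps)
  then have inner: "inner ?W1 ?W2 =
      exp z * (x + a * exp c) * (x - a) + exp (- z) * (y + b * exp (- c)) * (y - b)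
        + 4 * sinh ((z + c) / 2) * sinh ((z - c) / 2)"
    by (simp add: algebra_simps)
  have "(exp ((z + c) / 2))\<^sup>2 = exp (z + c)" "(exp (- ((z + c) / 2)))\<^sup>2 = exp (- (z + c))"
    and "(exp ((z - c) / 2))\<^sup>2 = exp (z - c)" "(exp (- ((z - c) / 2)))\<^sup>2 = exp (- (z - c))"
    by (simp_all add: power2_eq_square flip: exp_add)
  then have norm_W:
      "norm ?W1 = sqrt (exp (z + c) * (x - a)^2 + exp (- (z + c)) * (y - b)^2
                        + 4 * (sinh ((z - c) / 2))^2)"
      "norm ?W2 = sqrt (exp (z - c) * (x + a * exp c)^2 + exp (- (z - c)) * (y + b * exp (- c))^2
                        + 4 * (sinh ((z + c) / 2))^2)"
    by (simp_all add: norm_triple power_mult_distrib)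
  show ?thesis
    unfolding isoptic_iff_cos[OF assms(4,5,2,3)] V1 V2 inner_minus_left inner_minus_right
      minus_minus norm_minus_cancel inner norm_W ..
qed

end
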